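(* Let $p$ be an odd prime. Then $$\sum_{r=0}^{\frac{p-1}{2}}\binom{\frac{p-1}{2}}{r}^3\equiv 0\pmod{p}\quad\Longleftrightarrow\quad p\equiv 5\pmod 8\ \text{ or }\ p\equiv 7\pmod 8.$$ *)

theory Defs
  imports "HOL-Number_Theory.Number_Theory"
begin

end

theory Submission
  imports Defs "HOL-Computational_Algebra.Polynomial"
begin

(*
  Let \<theta> = x d/dx, N = (p - 1)/2, M = \<lfloor>p/4\<rfloor> and u = \<Sum>_i (M choose i)^2 x^i.
  The numbers b_k = (-1)^k (N choose k)^3 are determined by b_0 = 1 and
  k^3 b_k = (k - 1 - N)^3 b_(k-1), i.e. by the equation \<theta>^3 g = x (\<theta> - N)^3 g.
  The polynomial u satisfies the hypergeometric equation \<theta>^2 u = x (\<theta> - M)^2 u, and a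
  computation with its symmetric square shows that g = u^2 (if p = 4M + 1), resp.
  g = (1 - x) u^2 (if p = 4M + 3), satisfies the equation for b up to an error term
  divisible by p. As k^3 is invertible modulo p for k \<le> N, the coefficients of g are
  congruent to the b_k, and evaluation at x = -1 gives \<Sum>_k (N choose k)^3 \<equiv> u(-1)^2,
  resp. 2 u(-1)^2. Finally u(-1) is the coefficient of x^M in (1 - x^2)^M, which is
  \<plusminus>(M choose M/2), prime to p, for even M and 0 for odd M; and M is odd exactly when
  p \<equiv> 5, 7 (mod 8).
*)

section \<open>The Euler operator on polynomials\<close>

definition euler_op :: "'a::idom poly \<Rightarrow> 'a poly" where
  "euler_op q = [:0, 1:] * pderiv q"

definition euler_shift :: "'a::idom \<Rightarrow> 'a poly \<Rightarrow> 'a poly" where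
  "euler_shift c q = euler_op q + [:c:] * q"

lemma euler_op_0 [simp]: "euler_op 0 = 0"
  by (simp add: euler_op_def)

lemma euler_op_one [simp]: "euler_op 1 = 0"
  by (simp add: euler_op_def)

lemma euler_op_numeral [simp]: "euler_op (numeral n) = 0"
  by (simp add: euler_op_def)

lemma euler_op_const [simp]: "euler_op [:c:] = 0"
  by (simp add: euler_op_def)

lemma euler_op_X [simp]: "euler_op [:0, 1:] = [:0, 1:]"
  by (simp add: euler_op_def pderiv_pCons)

lemma euler_op_add: "euler_op (p + q) = euler_op p + euler_op q"
  by (simp add: euler_op_def pderiv_add distrib_left)

lemma euler_op_diff: "euler_op (p - q) = euler_op p - euler_op q"
  by (simp add: euler_op_def pderiv_diff right_diff_distrib)

lemma euler_op_mult: "euler_op (p * q) = euler_op p * q + p * euler_op q"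
  by (simp add: euler_op_def pderiv_mult algebra_simps)

lemma euler_op_smult: "euler_op (smult c q) = smult c (euler_op q)"
  by (simp add: euler_op_def pderiv_smult)

lemma euler_op_euler_shift: "euler_op (euler_shift c q) = euler_shift c (euler_op q)"
  by (simp add: euler_shift_def euler_op_add euler_op_smult)

lemma euler_shift_square:
  "euler_shift c (euler_shift c q) = euler_op (euler_op q) + 2 * [:c:] * euler_op q + [:c:]^2 * q"
proof -
  define C where "C = [:c:]"
  have "euler_op C = 0" by (simp add: C_def)
  then show ?thesis
    unfolding euler_shift_def C_def[symmetric] euler_op_add euler_op_mult
    by (simp add: algebra_simps power2_eq_square)
qed

lemma euler_shift_cube:
  "euler_shift c (euler_shift c (euler_shift c q)) = euler_op (euler_op (euler_op q))
     + 3 * [:c:] * euler_op (euler_op q) + 3 * [:c:]^2 * euler_op q + [:c:]^3 * q"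
proof -
  define C where "C = [:c:]"
  have "euler_op C = 0" by (simp add: C_def)
  then show ?thesis
    unfolding euler_shift_def C_def[symmetric] euler_op_add euler_op_mult
    by (simp add: algebra_simps power2_eq_square power3_eq_cube)
qed

lemma coeff_X_mult:
  "coeff ([:0, 1:] * (q :: 'a::comm_semiring_1 poly)) k = (if k = 0 then 0 else coeff q (k - 1))"
  by (cases k) simp_all

lemma coeff_one_minus_X_mult:
  "coeff ((1 - [:0, 1:]) * (q :: 'a::comm_ring_1 poly)) k
    = coeff q k - (if k = 0 then 0 else coeff q (k - 1))"
  by (simp only: left_diff_distrib mult_1_left coeff_diff coeff_X_mult)

lemma coeff_euler_op: "coeff (euler_op q) k = of_nat k * coeff q k"
  by (cases k) (simp_all add: euler_op_def coeff_pderiv)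

lemma coeff_euler_shift: "coeff (euler_shift c q) k = (of_nat k + c) * coeff q k"
  by (simp add: euler_shift_def coeff_euler_op distrib_right)

lemma coeff_euler_op_cube_diff:
  "coeff (euler_op (euler_op (euler_op g)) - [:0, 1:] * euler_shift c (euler_shift c (euler_shift c g))) k
    = of_nat k ^ 3 * coeff g k - (if k = 0 then 0 else (of_nat k - 1 + c) ^ 3 * coeff g (k - 1))"
  by (cases k) (simp_all add: coeff_euler_op coeff_euler_shift coeff_X_mult power3_eq_cube algebra_simps)

lemma dvd_coeff_of_dvd_coeff_one_minus_X_mult:
  fixes h :: "'a::comm_ring_1 poly"
  assumes "\<And>k. d dvd coeff ((1 - [:0, 1:]) * h) k"
  shows "d dvd coeff h k"
proof (induction k)
  case 0
  then show ?case using assms[of 0] by (simp add: coeff_one_minus_X_mult)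
next
  case (Suc k)
  have "d dvd coeff h (Suc k) - coeff h k"
    using assms[of "Suc k"] by (simp add: coeff_one_minus_X_mult)
  then show ?case
    using Suc.IH dvd_add by fastforce
qed

lemma poly_eq_sum_atMost:
  fixes q :: "'a::comm_semiring_1 poly"
  assumes "degree q \<le> n"
  shows "poly q a = (\<Sum>k\<le>n. coeff q k * a ^ k)"
  unfolding poly_altdef using assms
  by (intro sum.mono_neutral_left) (auto simp: coeff_eq_0)

section \<open>Symmetric squares of solutions of the hypergeometric equation\<close>

lemma euler_op_ode_derivative:
  assumes "euler_op (euler_op f) = [:0, 1:] * euler_shift s (euler_shift s f)"
  shows "euler_op (euler_op (euler_op f))
    = [:0, 1:] * euler_shift s (euler_shift s f) + [:0, 1:] * euler_shift s (euler_shift s (euler_op f))"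
  by (simp only: assms euler_op_mult euler_op_X euler_op_euler_shift)

lemma euler_op_cube_square:
  fixes f :: "'a::idom poly"
  assumes ode: "euler_op (euler_op f) = [:0, 1:] * euler_shift s (euler_shift s f)"
  shows "(1 - [:0, 1:]) * (euler_op (euler_op (euler_op (f * f)))
      - [:0, 1:] * euler_shift (2 * s) (euler_shift (2 * s) (euler_shift (2 * s) (f * f))))
    = [:2 * s * (1 - 4 * s):] * ([:0, 1:] * euler_shift s (f * f))"
proof -
  define x :: "'a poly" where "x = [:0, 1:]"
  define c where "c = [:s:]"
  define v where "v = euler_op f"
  define w where "w = euler_op v"
  define dw where "dw = euler_op w"
  have [simp]: "euler_op c = 0" "euler_op x = x"
    by (simp_all add: c_def x_def)
  have const_eqs: "[:2 * s:] = 2 * c" "[:2 * s * (1 - 4 * s):] = 2 * c * (1 - 4 * c)"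
    by (simp_all add: c_def numeral_poly algebra_simps)
  have R1: "w = x * (w + 2 * c * v + c^2 * f)"
    using ode unfolding euler_shift_square by (simp add: x_def c_def v_def w_def)
  have R2: "dw = x * (w + 2 * c * v + c^2 * f) + x * (dw + 2 * c * w + c^2 * v)"
    using euler_op_ode_derivative[OF ode] unfolding euler_shift_square
    by (simp add: x_def c_def v_def w_def dw_def)
  have "(1 - x) * ((6 * v * w + 2 * f * dw) - x * (6 * v * w + 2 * f * dw
      + 3 * (2 * c) * (2 * v * v + 2 * f * w) + 3 * (2 * c)^2 * (2 * f * v) + (2 * c)^3 * (f * f)))
      = 2 * c * (1 - 4 * c) * (x * (2 * f * v + c * (f * f)))" (is "?L = ?R")
  proof -
    have "?L - ?R = (6 * v - 6 * v * x + 2 * f * x - 8 * f * x * c) * (w - x * (w + 2 * c * v + c^2 * f))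
      + (2 * f - 2 * f * x) * (dw - (x * (w + 2 * c * v + c^2 * f) + x * (dw + 2 * c * w + c^2 * v)))"
      by (simp add: algebra_simps power2_eq_square power3_eq_cube)
    then show ?thesis
      using R1 R2 by simp
  qed
  moreover have "euler_op (f * f) = 2 * f * v" "euler_op (2 * f * v) = 2 * v * v + 2 * f * w"
    "euler_op (2 * v * v + 2 * f * w) = 6 * v * w + 2 * f * dw"
    by (simp_all add: v_def w_def dw_def euler_op_mult euler_op_add algebra_simps)
  ultimately show ?thesis
    unfolding euler_shift_cube unfolding const_eqs euler_shift_def c_def[symmetric] x_def[symmetric]
    by (simp only:)
qed

lemma euler_op_cube_one_minus_X_square:
  fixes f :: "'a::idom poly"
  assumes ode: "euler_op (euler_op f) = [:0, 1:] * euler_shift s (euler_shift s f)"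
  shows "euler_op (euler_op (euler_op ((1 - [:0, 1:]) * (f * f))))
      - [:0, 1:] * euler_shift (2 * s - 1) (euler_shift (2 * s - 1)
          (euler_shift (2 * s - 1) ((1 - [:0, 1:]) * (f * f))))
    = [:- 2 * (4 * s - 3) * (s - 1):] * ([:0, 1:] * euler_shift s (f * f))"
proof -
  define x :: "'a poly" where "x = [:0, 1:]"
  define c where "c = [:s:]"
  define v where "v = euler_op f"
  define w where "w = euler_op v"
  define dw where "dw = euler_op w"
  have [simp]: "euler_op c = 0" "euler_op x = x"
    by (simp_all add: c_def x_def)
  have const_eqs: "[:2 * s - 1:] = 2 * c - 1" "[:- 2 * (4 * s - 3) * (s - 1):] = - 2 * (4 * c - 3) * (c - 1)"
    by (simp_all add: c_def numeral_poly one_pCons algebra_simps)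
  have R1: "w = x * (w + 2 * c * v + c^2 * f)"
    using ode unfolding euler_shift_square by (simp add: x_def c_def v_def w_def)
  have R2: "dw = x * (w + 2 * c * v + c^2 * f) + x * (dw + 2 * c * w + c^2 * v)"
    using euler_op_ode_derivative[OF ode] unfolding euler_shift_square
    by (simp add: x_def c_def v_def w_def dw_def)
  define g where "g = (1 - x) * (f * f)"
  define g1 where "g1 = - x * f * f + (1 - x) * 2 * f * v"
  define g2 where "g2 = - x * f * f - 4 * x * f * v + (1 - x) * (2 * v * v + 2 * f * w)"
  define g3 where "g3 = - x * f * f - 6 * x * f * v - 6 * x * v * v - 6 * x * f * w + (1 - x) * (6 * v * w + 2 * f * dw)"
  have derivs: "euler_op g = g1" "euler_op g1 = g2" "euler_op g2 = g3"
    by (simp_all add: g_def g1_def g2_def g3_def v_def w_def dw_def euler_op_mult euler_op_add euler_op_diff algebra_simps)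
  have "g3 - x * (g3 + 3 * (2 * c - 1) * g2 + 3 * (2 * c - 1)^2 * g1 + (2 * c - 1)^3 * g)
      = - 2 * (4 * c - 3) * (c - 1) * (x * (2 * f * v + c * (f * f)))" (is "?L = ?R")
  proof -
    have "?L - ?R = (6 * v - 6 * v * x + 2 * f * x - 8 * f * x * c) * (w - x * (w + 2 * c * v + c^2 * f))
      + (2 * f - 2 * f * x) * (dw - (x * (w + 2 * c * v + c^2 * f) + x * (dw + 2 * c * w + c^2 * v)))"
      by (simp add: g_def g1_def g2_def g3_def algebra_simps power2_eq_square power3_eq_cube)
    then show ?thesis
      using R1 R2 by simp
  qed
  moreover have "euler_op (f * f) = 2 * f * v"
    by (simp add: v_def euler_op_mult algebra_simps)
  ultimately show ?thesis
    unfolding euler_shift_cube unfolding const_eqs euler_shift_def c_def[symmetric] x_def[symmetric] g_def[symmetric]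
    by (simp only: derivs)
qed

section \<open>The generating polynomial of the squared binomial coefficients\<close>

lemma of_nat_Suc_times_binomial:
  "of_nat (Suc k) * of_nat (n choose Suc k) = (of_nat n - of_nat k) * (of_nat (n choose k) :: 'a::comm_ring_1)"
proof (cases "k \<le> n")
  case True
  have "Suc k * (n choose Suc k) = (n - k) * (n choose k)"
    by (simp only: binomial_absorption binomial_absorb_comp)
  then show ?thesis
    using True by (metis of_nat_diff of_nat_mult)
qed (simp add: binomial_eq_0)

definition binomial_square_poly :: "nat \<Rightarrow> int poly" where
  "binomial_square_poly n = (\<Sum>i\<le>n. monom (int (n choose i) ^ 2) i)"

lemma coeff_binomial_square_poly: "coeff (binomial_square_poly n) k = int (n choose k) ^ 2"
  by (auto simp: binomial_square_poly_def coeff_sum coeff_monom)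

lemma degree_binomial_square_poly: "degree (binomial_square_poly n) \<le> n"
  by (rule degree_le) (auto simp: coeff_binomial_square_poly)

lemma binomial_square_poly_ode:
  "euler_op (euler_op (binomial_square_poly n))
    = [:0, 1:] * euler_shift (- int n) (euler_shift (- int n) (binomial_square_poly n))"
proof (rule poly_eqI)
  fix k
  show "coeff (euler_op (euler_op (binomial_square_poly n))) k
    = coeff ([:0, 1:] * euler_shift (- int n) (euler_shift (- int n) (binomial_square_poly n))) k"
  proof (cases k)
    case (Suc j)
    have "(int (Suc j) * int (n choose Suc j)) ^ 2 = ((int n - int j) * int (n choose j)) ^ 2"
      by (simp only: of_nat_Suc_times_binomial)
    then show ?thesis
      by (simp add: Suc coeff_X_mult coeff_euler_op coeff_euler_shift coeff_binomial_square_poly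
          power2_eq_square algebra_simps)
  qed (simp add: coeff_X_mult coeff_euler_op)
qed

lemma coeff_one_minus_X_square_power:
  "coeff ([:1, 0, -1:] ^ n) k
    = (if even k then (-1) ^ (k div 2) * of_nat (n choose (k div 2)) else (0 :: 'a::comm_ring_1))"
proof -
  have "[:1, 0, -1:] = monom (-1 :: 'a) 2 + 1"
    by (simp add: monom_altdef numeral_2_eq_2 one_pCons)
  then have "[:1, 0, -1:] ^ n = (\<Sum>j\<le>n. monom (of_nat (n choose j) * (-1 :: 'a) ^ j) (2 * j))"
    by (simp add: binomial_ring monom_power of_nat_poly smult_monom mult.commute)
  then have "coeff ([:1, 0, -1:] ^ n) k = (\<Sum>j\<le>n. if 2 * j = k then of_nat (n choose j) * (-1 :: 'a) ^ j else 0)"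
    by (simp add: coeff_sum coeff_monom)
  also have "\<dots> = (if even k then (-1) ^ (k div 2) * of_nat (n choose (k div 2)) else 0)"
  proof (cases "even k \<and> k div 2 \<le> n")
    case True
    then have "(\<Sum>j\<le>n. if 2 * j = k then of_nat (n choose j) * (-1 :: 'a) ^ j else 0)
      = (\<Sum>j\<in>{k div 2}. of_nat (n choose j) * (-1) ^ j)"
      by (intro sum.mono_neutral_cong_right) auto
    then show ?thesis using True by simp
  next
    case False
    then show ?thesis
      by (auto intro!: sum.neutral simp: binomial_eq_0)
  qed
  finally show ?thesis .
qed

lemma alternating_sum_binomial_squares:
  "(\<Sum>i\<le>n. (-1) ^ i * of_nat (n choose i) ^ 2)
    = (if even n then (-1) ^ (n div 2) * of_nat (n choose (n div 2)) else (0 :: 'a::comm_ring_1))"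
proof -
  have "(\<Sum>i\<le>n. (-1) ^ i * of_nat (n choose i) ^ 2)
      = (\<Sum>i\<le>n. coeff ([:1, -1:] ^ n) i * coeff ([:1, 1:] ^ n) (n - i) :: 'a)"
  proof (rule sum.cong)
    fix i assume "i \<in> {..n}"
    then show "(-1) ^ i * of_nat (n choose i) ^ 2
      = (coeff ([:1, -1:] ^ n) i * coeff ([:1, 1:] ^ n) (n - i) :: 'a)"
      by (simp add: coeff_linear_poly_power binomial_symmetric[symmetric] power2_eq_square)
  qed simp
  also have "\<dots> = coeff (([:1, -1:] * [:1, 1:]) ^ n) n"
    by (simp only: power_mult_distrib coeff_mult)
  also have "[:1, -1:] * [:1, 1:] = [:1, 0, -1 :: 'a:]"
    by simp
  finally show ?thesis
    by (simp add: coeff_one_minus_X_square_power)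
qed

lemma poly_binomial_square_poly_minus_one:
  "poly (binomial_square_poly n) (-1)
    = (if even n then (-1) ^ (n div 2) * int (n choose (n div 2)) else 0)"
  by (simp add: poly_eq_sum_atMost[OF degree_binomial_square_poly] coeff_binomial_square_poly
      alternating_sum_binomial_squares[symmetric] mult.commute)

lemma prime_not_dvd_binomial:
  assumes "prime p" and "n < p" and "k \<le> n"
  shows "\<not> p dvd (n choose k)"
proof
  assume "p dvd (n choose k)"
  moreover have "(n choose k) dvd fact n"
    using binomial_fact_lemma[OF \<open>k \<le> n\<close>] by (metis dvd_triv_right)
  ultimately have "p dvd fact n"
    by (rule dvd_trans)
  with assms show False
    by (simp add: prime_dvd_fact_iff)
qed

lemma prime_dvd_poly_binomial_square_poly_minus_one_iff:
  assumes "prime p" and "n < p"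
  shows "int p dvd poly (binomial_square_poly n) (-1) \<longleftrightarrow> odd n"
  using prime_not_dvd_binomial[OF assms, of "n div 2"]
  by (simp add: poly_binomial_square_poly_minus_one dvd_mult_unit_iff')

section \<open>Sums of cubes of binomial coefficients modulo p\<close>

lemma cong_coeff_binomial_cube:
  fixes g :: "int poly"
  assumes p: "prime p" and "N < p" and g0: "coeff g 0 = 1"
    and rec: "\<And>k. int p dvd coeff (euler_op (euler_op (euler_op g))
      - [:0, 1:] * euler_shift (- int N) (euler_shift (- int N) (euler_shift (- int N) g))) k"
    and "k \<le> N"
  shows "[coeff g k = (-1) ^ k * int (N choose k) ^ 3] (mod int p)"
  using \<open>k \<le> N\<close>
proof (induction k)
  case 0
  then show ?case using g0 by simp
next
  case (Suc k)
  define b where "b j = (-1) ^ j * int (N choose j) ^ 3" for j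
  have b_rec: "int (Suc k) ^ 3 * b (Suc k) = (int k - int N) ^ 3 * b k"
  proof -
    have "int (Suc k) ^ 3 * b (Suc k) = - ((-1) ^ k * (int (Suc k) * int (N choose Suc k)) ^ 3)"
      by (simp add: b_def power_mult_distrib)
    also have "\<dots> = - ((-1) ^ k * ((int N - int k) * int (N choose k)) ^ 3)"
      by (simp only: of_nat_Suc_times_binomial)
    also have "\<dots> = (int k - int N) ^ 3 * b k"
      by (simp add: b_def power_mult_distrib power3_eq_cube algebra_simps)
    finally show ?thesis .
  qed
  have "[int (Suc k) ^ 3 * coeff g (Suc k) = (int k - int N) ^ 3 * coeff g k] (mod int p)"
    using rec[of "Suc k"] unfolding coeff_euler_op_cube_diff by (simp add: cong_iff_dvd_diff)
  also have "[(int k - int N) ^ 3 * coeff g k = (int k - int N) ^ 3 * b k] (mod int p)"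
    using Suc by (intro cong_mult) (simp_all add: b_def)
  finally have "[int (Suc k) ^ 3 * coeff g (Suc k) = int (Suc k) ^ 3 * b (Suc k)] (mod int p)"
    by (simp only: b_rec)
  moreover have "\<not> p dvd Suc k"
    using Suc.prems \<open>N < p\<close> by (auto dest: dvd_imp_le)
  then have "coprime (int (Suc k) ^ 3) (int p)"
    using p by (simp add: prime_imp_coprime coprime_commute del: of_nat_Suc)
  ultimately have "[coeff g (Suc k) = b (Suc k)] (mod int p)"
    by (simp only: cong_mult_lcancel)
  then show ?case
    by (simp only: b_def)
qed

lemma cong_poly_minus_one_sum_binomial_cubes:
  fixes g :: "int poly"
  assumes "prime p" and "N < p" and "coeff g 0 = 1" and "degree g \<le> N"
    and "\<And>k. int p dvd coeff (euler_op (euler_op (euler_op g))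
      - [:0, 1:] * euler_shift (- int N) (euler_shift (- int N) (euler_shift (- int N) g))) k"
  shows "[poly g (-1) = int (\<Sum>r = 0..N. (N choose r) ^ 3)] (mod int p)"
proof -
  have "poly g (-1) = (\<Sum>k\<le>N. coeff g k * (-1) ^ k)"
    using assms(4) by (rule poly_eq_sum_atMost)
  also have "[\<dots> = (\<Sum>k\<le>N. (-1) ^ k * int (N choose k) ^ 3 * (-1) ^ k)] (mod int p)"
    using cong_coeff_binomial_cube[OF assms(1-3,5)] by (intro cong_sum cong_mult) auto
  also have "(\<Sum>k\<le>N. (-1) ^ k * int (N choose k) ^ 3 * (-1) ^ k) = int (\<Sum>r = 0..N. (N choose r) ^ 3)"
    by (simp add: atLeast0AtMost algebra_simps flip: power_add)
  finally show ?thesis .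
qed

lemma cong_sum_binomial_cubes_1_mod_4:
  assumes "prime p" and p: "p = 4 * M + 1"
  shows "[int (\<Sum>r = 0..2 * M. (2 * M choose r) ^ 3)
    = poly (binomial_square_poly M) (-1) ^ 2] (mod int p)"
proof -
  define u where "u = binomial_square_poly M"
  define s where "s = - int M"
  define c where "c = - int (2 * M)"
  have ode: "euler_op (euler_op u) = [:0, 1:] * euler_shift s (euler_shift s u)"
    unfolding u_def s_def by (rule binomial_square_poly_ode)
  have c_eq: "c = 2 * s" and factor_eq: "2 * s * (1 - 4 * s) = int p * (- 2 * int M)"
    by (simp_all add: c_def s_def p algebra_simps)
  define h where "h = euler_op (euler_op (euler_op (u * u)))
    - [:0, 1:] * euler_shift c (euler_shift c (euler_shift c (u * u)))"
  have "int p dvd coeff ((1 - [:0, 1:]) * h) k" for k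
    unfolding h_def c_eq euler_op_cube_square[OF ode] factor_eq by (cases k) simp_all
  then have "int p dvd coeff h k" for k
    by (rule dvd_coeff_of_dvd_coeff_one_minus_X_mult)
  moreover have "coeff (u * u) 0 = 1"
    by (simp add: u_def coeff_mult_0 coeff_binomial_square_poly)
  moreover have "degree (u * u) \<le> 2 * M"
    using degree_mult_le[of u u] degree_binomial_square_poly[of M] by (simp add: u_def)
  ultimately have "[poly (u * u) (-1) = int (\<Sum>r = 0..2 * M. (2 * M choose r) ^ 3)] (mod int p)"
    using assms unfolding h_def c_def by (intro cong_poly_minus_one_sum_binomial_cubes) simp_all
  then show ?thesis
    by (simp add: u_def power2_eq_square cong_sym_eq)
qed

lemma cong_sum_binomial_cubes_3_mod_4:
  assumes "prime p" and p: "p = 4 * M + 3"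
  shows "[int (\<Sum>r = 0..2 * M + 1. (2 * M + 1 choose r) ^ 3)
    = 2 * poly (binomial_square_poly M) (-1) ^ 2] (mod int p)"
proof -
  define u where "u = binomial_square_poly M"
  define g where "g = (1 - [:0, 1:]) * (u * u)"
  define s where "s = - int M"
  define c where "c = - int (2 * M + 1)"
  have ode: "euler_op (euler_op u) = [:0, 1:] * euler_shift s (euler_shift s u)"
    unfolding u_def s_def by (rule binomial_square_poly_ode)
  have c_eq: "c = 2 * s - 1" and factor_eq: "- 2 * (4 * s - 3) * (s - 1) = int p * (- 2 * (int M + 1))"
    by (simp_all add: c_def s_def p algebra_simps)
  have "int p dvd coeff (euler_op (euler_op (euler_op g))
      - [:0, 1:] * euler_shift c (euler_shift c (euler_shift c g))) k" for k
    unfolding g_def c_eq euler_op_cube_one_minus_X_square[OF ode] factor_eq by (cases k) simp_all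
  moreover have "coeff g 0 = 1"
    by (simp add: g_def u_def coeff_mult_0 coeff_binomial_square_poly)
  moreover have "degree g \<le> 2 * M + 1"
  proof -
    have "degree (1 - [:0, 1:] :: int poly) \<le> 1"
      by (intro degree_diff_le) simp_all
    then show ?thesis
      using degree_mult_le[of "1 - [:0, 1:]" "u * u"] degree_mult_le[of u u] degree_binomial_square_poly[of M]
      by (simp add: g_def u_def)
  qed
  ultimately have "[poly g (-1) = int (\<Sum>r = 0..2 * M + 1. (2 * M + 1 choose r) ^ 3)] (mod int p)"
    using assms unfolding c_def by (intro cong_poly_minus_one_sum_binomial_cubes) simp_all
  then show ?thesis
    by (simp add: g_def u_def power2_eq_square cong_sym_eq)
qed

lemma prime_dvd_sum_binomial_cubes_iff:
  assumes "prime p" and "odd p"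
  shows "int p dvd int (\<Sum>r = 0..(p - 1) div 2. ((p - 1) div 2 choose r) ^ 3)
    \<longleftrightarrow> int p dvd poly (binomial_square_poly (p div 4)) (-1)"
proof -
  define M where "M = p div 4"
  have prime_int: "prime (int p)"
    using assms(1) by simp
  have "\<not> p dvd 2"
    using assms primes_dvd_imp_eq two_is_prime_nat by blast
  then have "\<not> int p dvd 2"
    by (metis int_dvd_int_iff of_nat_numeral)
  have "p = 4 * M + 1 \<or> p = 4 * M + 3"
    using \<open>odd p\<close> unfolding M_def by presburger
  then show ?thesis
  proof
    assume 1: "p = 4 * M + 1"
    then have "(p - 1) div 2 = 2 * M"
      by simp
    then show ?thesis
      using cong_dvd_iff[OF cong_sum_binomial_cubes_1_mod_4[OF assms(1) 1]] prime_int
      by (simp add: M_def prime_dvd_power_iff)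
  next
    assume 3: "p = 4 * M + 3"
    then have "(p - 1) div 2 = 2 * M + 1"
      by simp
    then show ?thesis
      using cong_dvd_iff[OF cong_sum_binomial_cubes_3_mod_4[OF assms(1) 3]] prime_int \<open>\<not> int p dvd 2\<close>
      by (simp add: M_def prime_dvd_power_iff prime_dvd_mult_iff)
  qed
qed

lemma odd_div_4_iff_cong_5_or_7_mod_8:
  assumes "odd (p :: nat)"
  shows "odd (p div 4) \<longleftrightarrow> [p = 5] (mod 8) \<or> [p = 7] (mod 8)"
proof -
  have "p mod 8 = 1 \<or> p mod 8 = 3 \<or> p mod 8 = 5 \<or> p mod 8 = 7"
    using assms by presburger
  then show ?thesis
    unfolding cong_def by (auto simp: odd_iff_mod_2_eq_one) presburger+
qed

theorem mainTheorem5: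
  fixes p :: nat
  assumes "prime p" and "odd p"
  shows "[(\<Sum>r = 0..(p - 1) div 2. ((p - 1) div 2 choose r) ^ 3) = 0] (mod p)
    \<longleftrightarrow> ([p = 5] (mod 8) \<or> [p = 7] (mod 8))"
proof -
  have "p div 4 < p"
    using prime_gt_0_nat[OF assms(1)] by simp
  have "[(\<Sum>r = 0..(p - 1) div 2. ((p - 1) div 2 choose r) ^ 3) = 0] (mod p)
      \<longleftrightarrow> int p dvd int (\<Sum>r = 0..(p - 1) div 2. ((p - 1) div 2 choose r) ^ 3)"
    by (simp only: cong_0_iff int_dvd_int_iff)
  also have "\<dots> \<longleftrightarrow> int p dvd poly (binomial_square_poly (p div 4)) (-1)"
    using assms by (rule prime_dvd_sum_binomial_cubes_iff)
  also have "\<dots> \<longleftrightarrow> odd (p div 4)"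
    using assms(1) \<open>p div 4 < p\<close> by (rule prime_dvd_poly_binomial_square_poly_minus_one_iff)
  also have "\<dots> \<longleftrightarrow> [p = 5] (mod 8) \<or> [p = 7] (mod 8)"
    using assms(2) by (rule odd_div_4_iff_cong_5_or_7_mod_8)
  finally show ?thesis .
qed

end
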